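(* For any choice of the almost disjoint family and enumeration in its definition, $[0,1]\notin\mathrm{FinBW}(\rho^{[0,1]})$.
   Context: $\mathrm{conv}$ is the ideal on $\mathbb{Q}\cap[0,1]$ of all sets covered by the ranges of finitely many sequences in $\mathbb{Q}\cap[0,1]$ convergent in $[0,1]$. Definition of $\rho^{[0,1]}$: let $\mathcal{A}=\{A_\alpha:\alpha<\mathfrak{c}\}$ be an almost disjoint family on $\omega$ (pairwise distinct infinite subsets with pairwise finite intersections). Let $X$ be the set of all $x\colon\omega\times\omega\to[0,1]\cap\mathbb{Q}$ such that: (i) for every $p\in[0,1]$ there is an open neighborhood $U$ of $p$ with $x[(\omega\setminus[0,n])\times\omega]\not\subseteq U$ for all $n$; (ii) $x$ is injective; (iii) $x[(\omega\setminus[0,n])\times\omega]\notin\mathrm{conv}$ for all $n$. Fix an enumeration $X=\{x_\alpha:\alpha<\mathfrak{c}\}$. Let $\overline{\mathcal{A}}=\{A\setminus K:A\in\mathcal{A},K\in[\omega]^{<\omega}\}$ and $\rho^{[0,1]}\colon\overline{\mathcal{A}}\to[[0,1]\cap\mathbb{Q}]^\omega$, $\rho^{[0,1]}(A_\alpha\setminus K)=x_\alpha[(\omega\setminus[0,\max(A_\alpha\cap K)])\times\omega]$, with $\max\emptyset=0$; here $[0,m]=\{0,\dots,m\}$. (This is a partition regular function.) For a function $\rho\colon\mathcal{F}\to[\Lambda]^\omega$ with $\mathcal{F}\subseteq[\Omega]^\omega$ and a Hausdorff space $Y$: for $f\colon\Lambda\to Y$ and $F\in\mathcal{F}$, $f\restriction\rho(F)$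 $\rho$-converges to $y$ if for every neighborhood $U$ of $y$ some finite $K\subseteq\Omega$ has $f[\rho(F\setminus K)]\subseteq U$; $\mathrm{FinBW}(\rho)$ is the class of spaces $Y$ such that for every $f\colon\Lambda\to Y$ some $F\in\mathcal{F}$ makes $f\restriction\rho(F)$ $\rho$-convergent to a point of $Y$. *)

theory Defs
  imports "HOL-Analysis.Analysis"
begin

definition Q01 :: "real set" where
  "Q01 = {q. q \<in> \<rat> \<and> 0 \<le> q \<and> q \<le> 1}"

definition conv :: "real set \<Rightarrow> bool" where
  "conv A \<longleftrightarrow> A \<subseteq> Q01 \<and>
     (\<exists>S :: (nat \<Rightarrow> real) set. finite S \<and>
        (\<forall>s\<in>S. range s \<subseteq> Q01 \<and> (\<exists>L\<in>{0..1}. s \<longlonglongrightarrow> L)) \<and>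
        A \<subseteq> \<Union> (range ` S))"

definition tail :: "nat \<Rightarrow> (nat \<times> nat) set" where
  "tail n = {p. fst p > n}"

definition Xset :: "(nat \<times> nat \<Rightarrow> real) set" where
  "Xset = {x. range x \<subseteq> Q01
      \<and> (\<forall>p\<in>{0..1::real}. \<exists>U. openin (top_of_set {0..1}) U \<and> p \<in> U
             \<and> (\<forall>n. \<not> (x ` tail n \<subseteq> U)))
      \<and> inj x
      \<and> (\<forall>n. \<not> conv (x ` tail n))}"

definition maxz :: "nat set \<Rightarrow> nat" where
  "maxz S = (if S = {} then 0 else Max S)"

definition almost_disjoint_family :: "('i \<Rightarrow> nat set) \<Rightarrow> bool" where
  "almost_disjoint_family A \<longleftrightarrow> inj A \<and> (\<forall>i. infinite (A i))
     \<and> (\<forall>i j. i \<noteq> j \<longrightarrow> finite (A i \<inter> A j))"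

definition Abar :: "('i \<Rightarrow> nat set) \<Rightarrow> nat set set" where
  "Abar A = {A i - K | i K. finite K}"

text \<open>The function rho^[0,1] (well defined on Abar A for an almost disjoint family A).\<close>
definition rho01 :: "('i \<Rightarrow> nat set) \<Rightarrow> ('i \<Rightarrow> nat \<times> nat \<Rightarrow> real) \<Rightarrow> nat set \<Rightarrow> real set" where
  "rho01 A x F = (SOME Y. \<exists>i K. finite K \<and> F = A i - K
       \<and> Y = x i ` tail (maxz (A i \<inter> K)))"

definition rho_converges ::
  "('o set \<Rightarrow> 'l set) \<Rightarrow> ('l \<Rightarrow> 'y) \<Rightarrow> 'o set \<Rightarrow> 'y topology \<Rightarrow> 'y \<Rightarrow> bool" where
  "rho_converges \<rho> f F T y \<longleftrightarrow>
     (\<forall>U. openin T U \<and> y \<in> U \<longrightarrow> (\<exists>K. finite K \<and> f ` \<rho> (F - K) \<subseteq> U))"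

definition FinBW ::
  "('o set \<Rightarrow> 'l set) \<Rightarrow> 'o set set \<Rightarrow> 'l set \<Rightarrow> 'y topology \<Rightarrow> bool" where
  "FinBW \<rho> \<F> \<Lambda> T \<longleftrightarrow>
     (\<forall>f. f ` \<Lambda> \<subseteq> topspace T \<longrightarrow>
        (\<exists>F\<in>\<F>. \<exists>y\<in>topspace T. rho_converges \<rho> f F T y))"

end

theory Submission
  imports Defs
begin

text \<open>The identity map of \<open>\<rat> \<inter> [0,1]\<close> witnesses the failure. Every element of \<open>Abar A\<close> is
  \<open>A\<^sub>\<alpha> - K\<close> for a unique \<open>\<alpha>\<close>, since distinct members of an almost disjoint family cannot agree
  up to finite sets; hence each \<open>\<rho>\<close>-image of it is a tail \<open>x\<^sub>\<alpha>[(\<omega> - [0,n]) \<times> \<omega>]\<close>. Condition (i)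
  in the definition of \<open>X\<close> gives every \<open>p \<in> [0,1]\<close> a neighbourhood containing none of these
  tails, so the identity \<open>\<rho>\<close>-converges to no point.\<close>

lemma almost_disjoint_family_Diff_finite_eq:
  assumes "almost_disjoint_family A" and "finite K" and "A i - K = A j - K'"
  shows "j = i"
proof (rule ccontr)
  assume "j \<noteq> i"
  then have "finite (A i \<inter> A j)"
    using assms(1) unfolding almost_disjoint_family_def by (metis Int_commute)
  moreover have "A i - K \<subseteq> A i \<inter> A j"
    using assms(3) by blast
  ultimately have "finite (A i - K)"
    by (rule finite_subset[rotated])
  then have "finite (A i)"
    using assms(2) by (metis Diff_infinite_finite)
  then show False
    using assms(1) unfolding almost_disjoint_family_def by blast
qed

lemma rho01_Diff_finite_eq_tail:
  assumes "almost_disjoint_family A" and "finite K"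
  obtains n where "rho01 A x (A i - K) = x i ` tail n"
proof -
  let ?P = "\<lambda>Y. \<exists>j K'. finite K' \<and> A i - K = A j - K' \<and> Y = x j ` tail (maxz (A j \<inter> K'))"
  have "?P (x i ` tail (maxz (A i \<inter> K)))"
    using assms(2) by blast
  then have "?P (rho01 A x (A i - K))"
    unfolding rho01_def by (rule someI)
  then obtain j K' where "A i - K = A j - K'" and "rho01 A x (A i - K) = x j ` tail (maxz (A j \<inter> K'))"
    by blast
  with almost_disjoint_family_Diff_finite_eq[OF assms] show thesis
    using that by blast
qed

lemma not_rho_converges_id_rho01:
  assumes "almost_disjoint_family A" and "F \<in> Abar A" and "range x \<subseteq> Xset"
    and "y \<in> {0..1}"
  shows "\<not> rho_converges (rho01 A x) id F (top_of_set {0..1}) y"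
proof
  assume conv: "rho_converges (rho01 A x) id F (top_of_set {0..1}) y"
  obtain i K0 where "finite K0" and F: "F = A i - K0"
    using assms(2) unfolding Abar_def by blast
  have "x i \<in> Xset"
    using assms(3) by blast
  then obtain U where "openin (top_of_set {0..1}) U" "y \<in> U"
    and no_tail: "\<And>n. \<not> x i ` tail n \<subseteq> U"
    using assms(4) unfolding Xset_def by blast
  then obtain K where "finite K" and sub: "rho01 A x (F - K) \<subseteq> U"
    using conv unfolding rho_converges_def by auto
  have "F - K = A i - (K0 \<union> K)"
    using F by blast
  moreover obtain n where "rho01 A x (A i - (K0 \<union> K)) = x i ` tail n"
    using rho01_Diff_finite_eq_tail[OF assms(1)] \<open>finite K0\<close> \<open>finite K\<close> by blast
  ultimately show False
    using sub no_tail by simp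
qed

theorem lemma6p5:
  fixes A :: "real \<Rightarrow> nat set"
    and x :: "real \<Rightarrow> nat \<times> nat \<Rightarrow> real"
  assumes "almost_disjoint_family A"
    and "bij_betw x UNIV Xset"
  shows "\<not> FinBW (rho01 A x) (Abar A) Q01 (top_of_set {0..1::real})"
proof
  assume FinBW: "FinBW (rho01 A x) (Abar A) Q01 (top_of_set {0..1::real})"
  have id_Q01: "id ` Q01 \<subseteq> topspace (top_of_set {0..1::real})"
    by (auto simp: Q01_def)
  obtain F y where "F \<in> Abar A" "y \<in> {0..1::real}"
    and "rho_converges (rho01 A x) id F (top_of_set {0..1}) y"
    using FinBW[unfolded FinBW_def, rule_format, OF id_Q01] by auto
  moreover have "range x \<subseteq> Xset"
    using assms(2) by (simp add: bij_betw_def)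
  ultimately show False
    using not_rho_converges_id_rho01[OF assms(1)] by blast
qed

end
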